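(* Let $ABC$ be a triangle and let $(P, P')$ and $(Q, Q')$ be two pairs of isogonal conjugates with respect to $ABC$. Let $R$ be a point on line $PQ$ and $R'$ a point on line $P'Q'$. Then the conics $(ABCPR)$ and $(ABCQ'R')$ intersect (at a point other than $A,B,C$) on line $RR'$.
   Context: For five points $V,W,X,Y,Z$, $(VWXYZ)$ denotes the conic through them. *)

theory Defs
  imports "HOL-Analysis.Analysis"
begin

(* Reflection of a vector v (based at vertex V) in the angle bisector at V of
   the angle UVW.  The bisector direction is the sum of the unit vectors VU, VW. *)
definition bis_reflect :: "real^2 \<Rightarrow> real^2 \<Rightarrow> real^2 \<Rightarrow> real^2 \<Rightarrow> real^2" where
  "bis_reflect V U W v =
     (let d = (1 / norm (U - V)) *\<^sub>R (U - V) + (1 / norm (W - V)) *\<^sub>R (W - V)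
      in (2 * (v \<bullet> d) / (d \<bullet> d)) *\<^sub>R d - v)"

definition isogonal_at :: "real^2 \<Rightarrow> real^2 \<Rightarrow> real^2 \<Rightarrow> real^2 \<Rightarrow> real^2 \<Rightarrow> bool" where
  "isogonal_at V U W P P' \<longleftrightarrow> collinear {V, P', V + bis_reflect V U W (P - V)}"

definition isogonal_conj :: "real^2 \<Rightarrow> real^2 \<Rightarrow> real^2 \<Rightarrow> real^2 \<Rightarrow> real^2 \<Rightarrow> bool" where
  "isogonal_conj A B C P P' \<longleftrightarrow>
     \<not> collinear {A, B, C} \<and>
     \<not> collinear {A, B, P} \<and> \<not> collinear {B, C, P} \<and> \<not> collinear {C, A, P} \<and>
     \<not> collinear {A, B, P'} \<and> \<not> collinear {B, C, P'} \<and> \<not> collinear {C, A, P'} \<and>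
     isogonal_at A B C P P' \<and> isogonal_at B C A P P' \<and> isogonal_at C A B P P'"

definition conic_set :: "real \<Rightarrow> real \<Rightarrow> real \<Rightarrow> real \<Rightarrow> real \<Rightarrow> real \<Rightarrow> (real^2) set" where
  "conic_set a b c d e f =
     {X. a * (X$1)^2 + b * (X$1) * (X$2) + c * (X$2)^2 + d * (X$1) + e * (X$2) + f = 0}"

definition is_conic :: "(real^2) set \<Rightarrow> bool" where
  "is_conic K \<longleftrightarrow> (\<exists>a b c d e f. (a, b, c) \<noteq> (0, 0, 0) \<and> K = conic_set a b c d e f)"

end

(* In barycentric coordinates y with respect to ABC, the conics through A, B, C are the curves
   m1 y2 y3 + m2 y3 y1 + m3 y1 y2 = 0, and isogonal conjugation is y -> (a^2/y1 : b^2/y2 : c^2/y3).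
   With w = p x q the line PQR, the circumconic through P and R has coefficients proportional to
   p r w (componentwise), and the one through Q' and R' coefficients proportional to q' r' w' with
   w' = p' x q'.  Isogonal conjugation turns q' w' into a multiple of g = p w, whose entries sum to
   p . (p x q) = 0, so the two conics are m = alpha g r and l = beta g r'.  For a common point x
   off the sidelines, (x2 x3, x3 x1, x1 x2) is parallel to m x l, hence to (g2 g3 n1, g3 g1 n2, g1 g2 n3)
   with n = r x r', and then x1 x2 x3 (x . n) is a multiple of g1 + g2 + g3 = 0.  Finiteness of
   K1 and K2's intersection is what guarantees that the conics differ and that X is off the sidelines. *)

theory Submission
  imports Defs "HOL-Computational_Algebra.Polynomial"
begin

unbundle cross3_syntax

section \<open>Circumconics in barycentric coordinates\<close>

definition circum_monomials :: "real^3 \<Rightarrow> real^3" where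
  "circum_monomials y = vector [y$2 * y$3, y$3 * y$1, y$1 * y$2]"

lemma circum_monomials_component [simp]:
  "circum_monomials y $ 1 = y$2 * y$3" "circum_monomials y $ 2 = y$3 * y$1"
  "circum_monomials y $ 3 = y$1 * y$2"
  by (simp_all add: circum_monomials_def)

lemma orthogonal_imp_multiple_cross:
  fixes x u v :: "real^3"
  assumes "x \<bullet> u = 0" "x \<bullet> v = 0" "u \<times> v \<noteq> 0"
  shows "\<exists>c. x = c *\<^sub>R (u \<times> v)"
proof -
  have "(u \<times> v) \<times> x = 0"
    using assms(1,2) by (metis Lagrange cross_skew inner_commute minus_zero scale_zero_left diff_zero)
  then show ?thesis
    using assms(3) by (auto simp: cross_eq_0 collinear_lemma)
qed

lemma circum_monomials_cross:
  "circum_monomials p \<times> circum_monomials r = - (p * r * (p \<times> r))"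
  by (simp add: vec_eq_iff forall_3 cross_components algebra_simps)

lemma circumconic_coeffs_through_two_points:
  fixes m p r w :: "real^3"
  assumes "m \<bullet> circum_monomials p = 0" "m \<bullet> circum_monomials r = 0"
    and "w \<bullet> p = 0" "w \<bullet> r = 0" "w \<noteq> 0" "p * r * (p \<times> r) \<noteq> 0"
  shows "\<exists>\<alpha>. m = \<alpha> *\<^sub>R (p * r * w)"
proof -
  have "circum_monomials p \<times> circum_monomials r \<noteq> 0"
    using assms(6) by (simp add: circum_monomials_cross)
  then obtain \<mu> where "m = \<mu> *\<^sub>R (circum_monomials p \<times> circum_monomials r)"
    using orthogonal_imp_multiple_cross[OF assms(1,2)] by blast
  then have \<mu>: "m = (- \<mu>) *\<^sub>R (p * r * (p \<times> r))"
    by (simp add: circum_monomials_cross)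
  have "p \<times> r \<noteq> 0" using assms(6) by auto
  then obtain \<nu> where \<nu>: "w = \<nu> *\<^sub>R (p \<times> r)"
    using orthogonal_imp_multiple_cross[OF assms(3,4)] by blast
  with assms(5) have "\<nu> \<noteq> 0" by auto
  have "m = (- \<mu> / \<nu>) *\<^sub>R (p * r * w)"
    using \<open>\<nu> \<noteq> 0\<close> unfolding \<mu> \<nu> by (simp add: vec_eq_iff)
  then show ?thesis ..
qed

lemma times_cross_times:
  fixes g r t :: "real^3"
  shows "(g * r) \<times> (g * t) = circum_monomials g * (r \<times> t)"
  by (simp add: vec_eq_iff forall_3 cross_components algebra_simps)

lemma circumconics_common_point_collinear:
  fixes g r t x m l :: "real^3"
  assumes "m = \<alpha> *\<^sub>R (g * r)" "l = \<beta> *\<^sub>R (g * t)" "g$1 + g$2 + g$3 = 0"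
    and "m \<bullet> circum_monomials x = 0" "l \<bullet> circum_monomials x = 0" "m \<times> l \<noteq> 0"
    and "x$1 * x$2 * x$3 \<noteq> 0"
  shows "x \<bullet> (r \<times> t) = 0"
proof -
  define n where "n = r \<times> t"
  obtain k where "circum_monomials x = k *\<^sub>R (m \<times> l)"
    using orthogonal_imp_multiple_cross assms(4-6) by (metis inner_commute)
  also have "m \<times> l = (\<alpha> * \<beta>) *\<^sub>R (circum_monomials g * n)"
    unfolding assms(1,2) n_def by (simp add: cross_mult_left cross_mult_right times_cross_times)
  finally have "circum_monomials x = (k * \<alpha> * \<beta>) *\<^sub>R (circum_monomials g * n)"
    by simp
  then obtain c where c: "x$2 * x$3 = c * (g$2 * g$3) * n$1"
      "x$3 * x$1 = c * (g$3 * g$1) * n$2" "x$1 * x$2 = c * (g$1 * g$2) * n$3"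
    by (auto simp: vec_eq_iff forall_3)
  have "(x$1 * x$2 * x$3) * (x \<bullet> n)
      = (x$3 * x$1) * (x$1 * x$2) * n$1 + (x$1 * x$2) * (x$2 * x$3) * n$2
        + (x$2 * x$3) * (x$3 * x$1) * n$3"
    by (simp add: inner_vec_def sum_3 algebra_simps)
  also have "\<dots> = (c^2 * g$1 * g$2 * g$3 * n$1 * n$2 * n$3) * (g$1 + g$2 + g$3)"
    unfolding c by (simp add: power2_eq_square algebra_simps)
  finally show ?thesis using assms(3,7) by (simp add: n_def)
qed

lemma isogonal_times_cross_component:
  fixes a b k1 k2 k3 p1 p2 p3 q1 q2 q3 p1' p2' p3' q1' q2' q3' :: real
  assumes "p1 * p1' = a * k1" "p2 * p2' = a * k2" "p3 * p3' = a * k3"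
    and "q1 * q1' = b * k1" "q2 * q2' = b * k2" "q3 * q3' = b * k3"
  shows "(p1 * p2 * p3 * q1 * q2 * q3) * (q1' * (p2' * q3' - p3' * q2'))
    = (- a * b^2 * k1 * k2 * k3) * (p1 * (p2 * q3 - p3 * q2))"
proof -
  have "(p1 * p2 * p3 * q1 * q2 * q3) * (q1' * (p2' * q3' - p3' * q2'))
      = p1 * p3 * q2 * ((q1 * q1') * (p2 * p2') * (q3 * q3'))
        - p1 * p2 * q3 * ((q1 * q1') * (p3 * p3') * (q2 * q2'))"
    by (simp add: algebra_simps)
  also have "\<dots> = p1 * p3 * q2 * ((b * k1) * (a * k2) * (b * k3))
      - p1 * p2 * q3 * ((b * k1) * (a * k3) * (b * k2))"
    by (simp only: assms)
  also have "\<dots> = (- a * b^2 * k1 * k2 * k3) * (p1 * (p2 * q3 - p3 * q2))"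
    by (simp add: algebra_simps power2_eq_square)
  finally show ?thesis .
qed

lemma isogonal_times_cross:
  fixes p q p' q' k :: "real^3"
  assumes "p * p' = a *\<^sub>R k" "q * q' = b *\<^sub>R k"
  shows "(p$1 * p$2 * p$3 * q$1 * q$2 * q$3) *\<^sub>R (q' * (p' \<times> q'))
    = (- a * b^2 * k$1 * k$2 * k$3) *\<^sub>R (p * (p \<times> q))"
proof -
  have pk: "p$i * p'$i = a * k$i" and qk: "q$i * q'$i = b * k$i" for i
    using assms by (simp_all add: vec_eq_iff)
  show ?thesis
    unfolding vec_eq_iff forall_3 vector_scaleR_component vector_mult_component cross_components
    using isogonal_times_cross_component[OF pk[of 1] pk[of 2] pk[of 3] qk[of 1] qk[of 2] qk[of 3]]
      isogonal_times_cross_component[OF pk[of 2] pk[of 3] pk[of 1] qk[of 2] qk[of 3] qk[of 1]]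
      isogonal_times_cross_component[OF pk[of 3] pk[of 1] pk[of 2] qk[of 3] qk[of 1] qk[of 2]]
    by (simp add: algebra_simps)
qed

lemma circumconics_meet_on_line_bary:
  fixes p q r p' q' r' x m l k :: "real^3"
  assumes iso: "p * p' = a *\<^sub>R k" "q * q' = b *\<^sub>R k"
    and nz: "\<forall>i. p$i \<noteq> 0" "\<forall>i. p'$i \<noteq> 0" "\<forall>i. q$i \<noteq> 0" "\<forall>i. q'$i \<noteq> 0"
    and "p \<times> q \<noteq> 0" and PQR: "p \<bullet> (q \<times> r) = 0" and PQR': "p' \<bullet> (q' \<times> r') = 0"
    and "p * r * (p \<times> r) \<noteq> 0" "q' * r' * (q' \<times> r') \<noteq> 0"
    and "m \<bullet> circum_monomials p = 0" "m \<bullet> circum_monomials r = 0"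
    and "l \<bullet> circum_monomials q' = 0" "l \<bullet> circum_monomials r' = 0"
    and "m \<bullet> circum_monomials x = 0" "l \<bullet> circum_monomials x = 0"
    and "m \<times> l \<noteq> 0" "x$1 * x$2 * x$3 \<noteq> 0"
  shows "x \<bullet> (r \<times> r') = 0"
proof -
  define g where "g = p * (p \<times> q)"
  have "g \<noteq> 0"
    using nz(1) \<open>p \<times> q \<noteq> 0\<close> by (auto simp: g_def vec_eq_iff)
  have "(p \<times> q) \<bullet> p = 0" "(p \<times> q) \<bullet> r = 0"
    using PQR by (metis cross_triple inner_commute dot_cross_self(1))+
  then obtain \<alpha> where "m = \<alpha> *\<^sub>R (p * r * (p \<times> q))"
    using circumconic_coeffs_through_two_points[of m p r "p \<times> q"] assms by blast
  then have \<alpha>: "m = \<alpha> *\<^sub>R (g * r)"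
    by (simp add: g_def mult_ac)
  define N where "N = p$1 * p$2 * p$3 * q$1 * q$2 * q$3"
  define \<kappa> where "\<kappa> = - a * b^2 * k$1 * k$2 * k$3 / N"
  have "a * k$i = p$i * p'$i" "b * k$i = q$i * q'$i" for i
    using iso by (simp_all add: vec_eq_iff)
  then have "a * b * k$1 * k$2 * k$3 \<noteq> 0"
    using nz by (metis mult_eq_0_iff)
  moreover have "N \<noteq> 0" using nz by (simp add: N_def)
  ultimately have "\<kappa> \<noteq> 0" by (simp add: \<kappa>_def)
  have "q' * (p' \<times> q') = inverse N *\<^sub>R (N *\<^sub>R (q' * (p' \<times> q')))"
    using \<open>N \<noteq> 0\<close> by simp
  also have "\<dots> = \<kappa> *\<^sub>R g"
    unfolding N_def isogonal_times_cross[OF iso(1,2)] by (simp add: \<kappa>_def N_def g_def divide_inverse mult_ac)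
  finally have "q' * (p' \<times> q') = \<kappa> *\<^sub>R g" .
  with \<open>\<kappa> \<noteq> 0\<close> have "p' \<times> q' \<noteq> 0"
    using \<open>g \<noteq> 0\<close> by auto
  moreover have "(p' \<times> q') \<bullet> q' = 0" "(p' \<times> q') \<bullet> r' = 0"
    using PQR' by (metis cross_triple inner_commute dot_cross_self(3))+
  ultimately obtain \<beta> where "l = \<beta> *\<^sub>R (q' * r' * (p' \<times> q'))"
    using circumconic_coeffs_through_two_points[of l q' r' "p' \<times> q'"] assms by blast
  also have "q' * r' * (p' \<times> q') = \<kappa> *\<^sub>R (g * r')"
    using \<open>q' * (p' \<times> q') = \<kappa> *\<^sub>R g\<close> by (simp add: vec_eq_iff mult_ac)
  finally have "l = (\<beta> * \<kappa>) *\<^sub>R (g * r')" by simp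
  moreover have "g$1 + g$2 + g$3 = 0"
    using dot_cross_self(1)[of p q] by (simp add: g_def inner_vec_def sum_3)
  ultimately show ?thesis
    using circumconics_common_point_collinear[OF \<alpha>] assms by blast
qed

lemma circum_monomials_scaleR [simp]:
  "circum_monomials (c *\<^sub>R y) = c^2 *\<^sub>R circum_monomials y"
  by (simp add: vec_eq_iff forall_3 power2_eq_square mult_ac)

lemma infinite_circumconic_bary:
  fixes m :: "real^3"
  assumes "m \<noteq> 0"
  shows "infinite {y. y$1 + y$2 + y$3 = 1 \<and> m \<bullet> circum_monomials y = 0}" (is "infinite ?S")
proof (cases "m$2 = 0 \<and> m$3 = 0")
  case True
  let ?f = "\<lambda>s. vector [s, 0, 1 - s] :: real^3"
  have "inj ?f"
    by (rule injI) (simp add: vec_eq_iff forall_3)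
  moreover have "range ?f \<subseteq> ?S"
    using True by (auto simp: inner_vec_def sum_3)
  ultimately show ?thesis
    using finite_imageD finite_subset infinite_UNIV_char_0 by blast
next
  case False
  \<comment> \<open>the second intersections with the lines \<open>y3 = t y2\<close> through the vertex \<open>(1, 0, 0)\<close>\<close>
  define s where "s t = - t * m$1 + (1 + t) * (t * m$2 + m$3)" for t
  define v :: "real \<Rightarrow> real^3" where "v t = vector [- t * m$1, t * m$2 + m$3, t * (t * m$2 + m$3)]" for t
  define T where "T = {t. s t \<noteq> 0 \<and> t * m$2 + m$3 \<noteq> 0}"
  have "poly ([:m$3, m$2 + m$3 - m$1, m$2:] * [:m$3, m$2:]) t = s t * (t * m$2 + m$3)" for t
    by (simp add: s_def algebra_simps)
  then have "UNIV - T = {t. poly ([:m$3, m$2 + m$3 - m$1, m$2:] * [:m$3, m$2:]) t = 0}"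
    by (auto simp: T_def)
  moreover have "[:m$3, m$2 + m$3 - m$1, m$2:] * [:m$3, m$2:] \<noteq> 0"
    using False by auto
  ultimately have "infinite T"
    by (metis finite_Diff2 infinite_UNIV_char_0 poly_roots_finite)
  moreover have "inj_on (\<lambda>t. (1 / s t) *\<^sub>R v t) T"
  proof (rule inj_onI)
    fix t t' assume "t \<in> T" "t' \<in> T" "(1 / s t) *\<^sub>R v t = (1 / s t') *\<^sub>R v t'"
    have "t = ((1 / s t) *\<^sub>R v t)$3 / ((1 / s t) *\<^sub>R v t)$2" if "t \<in> T" for t
      using that by (simp add: v_def T_def)
    then show "t = t'"
      using \<open>t \<in> T\<close> \<open>t' \<in> T\<close> \<open>(1 / s t) *\<^sub>R v t = (1 / s t') *\<^sub>R v t'\<close> by metis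
  qed
  moreover have "(\<lambda>t. (1 / s t) *\<^sub>R v t) ` T \<subseteq> ?S"
  proof safe
    fix t assume "t \<in> T"
    then show "((1 / s t) *\<^sub>R v t)$1 + ((1 / s t) *\<^sub>R v t)$2 + ((1 / s t) *\<^sub>R v t)$3 = 1"
      by (simp add: v_def T_def s_def divide_simps) (simp add: algebra_simps)
    have "m \<bullet> circum_monomials (v t) = 0"
      by (simp add: v_def inner_vec_def sum_3 algebra_simps)
    then show "m \<bullet> circum_monomials ((1 / s t) *\<^sub>R v t) = 0"
      by simp
  qed
  ultimately show ?thesis
    using finite_imageD finite_subset by blast
qed

section \<open>Barycentric coordinates\<close>

definition det2 :: "real^2 \<Rightarrow> real^2 \<Rightarrow> real" where
  "det2 u v = u$1 * v$2 - u$2 * v$1"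

lemma det2_eq_0_iff: "det2 u v = 0 \<longleftrightarrow> u = 0 \<or> v = 0 \<or> (\<exists>c. v = c *\<^sub>R u)"
proof
  assume h: "det2 u v = 0"
  show "u = 0 \<or> v = 0 \<or> (\<exists>c. v = c *\<^sub>R u)"
  proof (cases "u$1 = 0")
    case True
    show ?thesis
    proof (cases "u$2 = 0")
      case True
      then have "u = 0" using \<open>u$1 = 0\<close> by (simp add: vec_eq_iff forall_2)
      then show ?thesis by simp
    next
      case False
      have "v = (v$2 / u$2) *\<^sub>R u"
        using h True False by (simp add: vec_eq_iff forall_2 det2_def field_simps)
      then show ?thesis by blast
    qed
  next
    case False
    have "v = (v$1 / u$1) *\<^sub>R u"
      using h False by (simp add: vec_eq_iff forall_2 det2_def field_simps)
    then show ?thesis by blast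
  qed
qed (auto simp: det2_def)

lemma collinear_iff_det2: "collinear {X, Y, Z :: real^2} \<longleftrightarrow> det2 (Y - X) (Z - X) = 0"
proof -
  have "collinear {X, Y, Z} \<longleftrightarrow> collinear {Y, X, Z}"
    by (simp add: insert_commute)
  also have "\<dots> \<longleftrightarrow> collinear {0, Y - X, Z - X}"
    by (rule collinear_3) simp
  finally show ?thesis
    by (simp only: collinear_lemma det2_eq_0_iff)
qed

definition bary :: "real^2 \<Rightarrow> real^2 \<Rightarrow> real^2 \<Rightarrow> real^2 \<Rightarrow> real^3" where
  "bary A B C Y = (1 / det2 (B - A) (C - A)) *\<^sub>R
     vector [det2 (B - Y) (C - Y), det2 (C - Y) (A - Y), det2 (A - Y) (B - Y)]"

definition from_bary :: "real^2 \<Rightarrow> real^2 \<Rightarrow> real^2 \<Rightarrow> real^3 \<Rightarrow> real^2" where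
  "from_bary A B C y = y$1 *\<^sub>R A + y$2 *\<^sub>R B + y$3 *\<^sub>R C"

lemma det2_ne_0_iff: "det2 (B - A) (C - A) \<noteq> 0 \<longleftrightarrow> \<not> collinear {A, B, C}"
  by (simp add: collinear_iff_det2)

lemma bary_sum:
  assumes "\<not> collinear {A, B, C}"
  shows "bary A B C Y $ 1 + bary A B C Y $ 2 + bary A B C Y $ 3 = 1"
  using assms unfolding det2_ne_0_iff[symmetric]
  by (simp add: bary_def det2_def divide_simps) (simp add: algebra_simps)

lemma from_bary_bary:
  assumes "\<not> collinear {A, B, C}"
  shows "from_bary A B C (bary A B C Y) = Y"
  using assms unfolding det2_ne_0_iff[symmetric]
  by (simp add: from_bary_def bary_def det2_def vec_eq_iff forall_2 divide_simps) (simp add: algebra_simps)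

lemma bary_from_bary:
  assumes "\<not> collinear {A, B, C}" "y$1 + y$2 + y$3 = 1"
  shows "bary A B C (from_bary A B C y) = y"
proof -
  have y1: "y$1 = 1 - y$2 - y$3" using assms(2) by simp
  show ?thesis
    using assms(1) unfolding det2_ne_0_iff[symmetric]
    by (simp add: from_bary_def bary_def det2_def vec_eq_iff forall_3 divide_simps y1) (simp add: algebra_simps)
qed

lemma det2_from_bary:
  assumes "x$1 + x$2 + x$3 = 1" "y$1 + y$2 + y$3 = 1" "z$1 + z$2 + z$3 = 1"
  shows "det2 (from_bary A B C y - from_bary A B C x) (from_bary A B C z - from_bary A B C x)
    = det2 (B - A) (C - A) * (x \<bullet> (y \<times> z))"
proof -
  have "x$1 = 1 - x$2 - x$3" "y$1 = 1 - y$2 - y$3" "z$1 = 1 - z$2 - z$3"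
    using assms by simp_all
  then show ?thesis
    by (simp add: from_bary_def det2_def inner_vec_def sum_3 cross_components) (simp add: algebra_simps)
qed

lemma collinear_iff_bary:
  assumes "\<not> collinear {A, B, C}"
  shows "collinear {X, Y, Z} \<longleftrightarrow> bary A B C X \<bullet> (bary A B C Y \<times> bary A B C Z) = 0"
proof -
  have "det2 (Y - X) (Z - X) = det2 (B - A) (C - A) * (bary A B C X \<bullet> (bary A B C Y \<times> bary A B C Z))"
    using det2_from_bary[of "bary A B C X" "bary A B C Y" "bary A B C Z" A B C] bary_sum[OF assms]
    by (simp add: from_bary_bary[OF assms])
  then show ?thesis
    using assms by (simp add: collinear_iff_det2 det2_ne_0_iff[symmetric])
qed

lemma bary_eq_iff:
  assumes "\<not> collinear {A, B, C}"
  shows "bary A B C Y = bary A B C Z \<longleftrightarrow> Y = Z"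
  by (metis assms from_bary_bary)

lemma bary_cross_eq_0_iff:
  assumes "\<not> collinear {A, B, C}"
  shows "bary A B C Y \<times> bary A B C Z = 0 \<longleftrightarrow> Y = Z"
proof
  assume "bary A B C Y \<times> bary A B C Z = 0"
  moreover have "bary A B C Y \<noteq> 0"
    using bary_sum[OF assms, of Y] by auto
  ultimately obtain c where c: "bary A B C Z = c *\<^sub>R bary A B C Y"
    using bary_sum[OF assms, of Z] by (auto simp: cross_eq_0 collinear_lemma)
  then have "c = 1"
    using bary_sum[OF assms, of Y] bary_sum[OF assms, of Z] by (simp add: distrib_left[symmetric])
  then show "Y = Z"
    using c bary_eq_iff[OF assms] by simp
qed simp

lemma bary_vertices:
  assumes "\<not> collinear {A, B, C}"
  shows "bary A B C A = vector [1, 0, 0]" "bary A B C B = vector [0, 1, 0]"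
    "bary A B C C = vector [0, 0, 1]"
  using assms unfolding det2_ne_0_iff[symmetric]
  by (simp_all add: bary_def det2_def vec_eq_iff forall_3 field_simps)

lemma bary_eq_0_iff_collinear:
  assumes "\<not> collinear {A, B, C}"
  shows "bary A B C Y $ 1 = 0 \<longleftrightarrow> collinear {B, C, Y}"
    "bary A B C Y $ 2 = 0 \<longleftrightarrow> collinear {C, A, Y}"
    "bary A B C Y $ 3 = 0 \<longleftrightarrow> collinear {A, B, Y}"
  using assms unfolding det2_ne_0_iff[symmetric]
  by (simp_all add: bary_def collinear_iff_det2 det2_def algebra_simps)

lemma bary_non_vertex:
  assumes "\<not> collinear {A, B, C}" "Y \<notin> {A, B, C}"
  shows "bary A B C Y $ 2 \<noteq> 0 \<or> bary A B C Y $ 3 \<noteq> 0"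
    "bary A B C Y $ 3 \<noteq> 0 \<or> bary A B C Y $ 1 \<noteq> 0"
    "bary A B C Y $ 1 \<noteq> 0 \<or> bary A B C Y $ 2 \<noteq> 0"
proof -
  have "bary A B C Y \<noteq> bary A B C V" if "V \<in> {A, B, C}" for V
    using assms that bary_eq_iff by blast
  then show "bary A B C Y $ 2 \<noteq> 0 \<or> bary A B C Y $ 3 \<noteq> 0"
    "bary A B C Y $ 3 \<noteq> 0 \<or> bary A B C Y $ 1 \<noteq> 0"
    "bary A B C Y $ 1 \<noteq> 0 \<or> bary A B C Y $ 2 \<noteq> 0"
    using bary_sum[OF assms(1), of Y] bary_vertices[OF assms(1)]
    by (simp_all add: vec_eq_iff forall_3) (metis add_0 add_0_right)+
qed

lemma bary_times_cross_ne_0: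
  assumes "\<not> collinear {A, B, C}" "\<forall>i. bary A B C P $ i \<noteq> 0" "R \<notin> {A, B, C, P}"
  shows "bary A B C P * bary A B C R * (bary A B C P \<times> bary A B C R) \<noteq> 0"
proof
  let ?p = "bary A B C P" and ?r = "bary A B C R"
  assume "?p * ?r * (?p \<times> ?r) = 0"
  then have z: "?r$i = 0 \<or> (?p \<times> ?r)$i = 0" for i
    using assms(2) by (auto simp: vec_eq_iff)
  have "R \<notin> {A, B, C}" "?p \<times> ?r \<noteq> 0"
    using assms(1,3) bary_cross_eq_0_iff by auto
  then show False
    using z[of 1] z[of 2] z[of 3] bary_non_vertex[OF assms(1)] assms(2)
    by (auto simp: vec_eq_iff forall_3 cross_components)
qed

section \<open>Conics through the vertices\<close>

definition conic_poly :: "real \<Rightarrow> real \<Rightarrow> real \<Rightarrow> real \<Rightarrow> real \<Rightarrow> real \<Rightarrow> real^2 \<Rightarrow> real" where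
  "conic_poly a b c d e f X = a * (X$1)^2 + b * (X$1) * (X$2) + c * (X$2)^2 + d * (X$1) + e * (X$2) + f"

lemma conic_poly_identically_zero:
  assumes "\<forall>X. conic_poly a b c d e f X = 0"
  shows "a = 0 \<and> b = 0 \<and> c = 0"
proof -
  have val: "conic_poly a b c d e f (vector [x, y]) = a*x^2 + b*x*y + c*y^2 + d*x + e*y + f" for x y
    by (simp add: conic_poly_def)
  have "f = 0" using assms val[of 0 0] by simp
  moreover have "a + d = 0" "a - d = 0" "c + e = 0" "c - e = 0" "a + b + c + d + e = 0"
    using assms val[of 1 0] val[of "-1" 0] val[of 0 1] val[of 0 "-1"] val[of 1 1] \<open>f = 0\<close> by simp_all
  ultimately show ?thesis by linarith
qed

text \<open>The midpoints enter because \<open>4 Q ((U + V) / 2) - Q U - Q V\<close> is the polar form of \<open>Q\<close> at \<open>U, V\<close>.\<close>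

lemma conic_poly_from_bary:
  assumes "y$1 + y$2 + y$3 = 1" and "conic_poly a b c d e f A = 0" "conic_poly a b c d e f B = 0"
    "conic_poly a b c d e f C = 0"
  shows "conic_poly a b c d e f (from_bary A B C y) = 4 * (vector [conic_poly a b c d e f (midpoint B C),
    conic_poly a b c d e f (midpoint C A), conic_poly a b c d e f (midpoint A B)] \<bullet> circum_monomials y)"
proof -
  let ?Q = "conic_poly a b c d e f"
  have y1: "y$1 = 1 - y$2 - y$3" using assms(1) by simp
  have "?Q (from_bary A B C y) = (y$1)^2 * ?Q A + (y$2)^2 * ?Q B + (y$3)^2 * ?Q C
      + y$2 * y$3 * (4 * ?Q (midpoint B C) - ?Q B - ?Q C)
      + y$3 * y$1 * (4 * ?Q (midpoint C A) - ?Q C - ?Q A)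
      + y$1 * y$2 * (4 * ?Q (midpoint A B) - ?Q A - ?Q B)"
    by (simp add: y1 conic_poly_def from_bary_def midpoint_def power2_eq_square algebra_simps)
  then show ?thesis
    using assms(2-4) by (simp add: inner_vec_def sum_3 algebra_simps)
qed

definition circumconic :: "real^2 \<Rightarrow> real^2 \<Rightarrow> real^2 \<Rightarrow> real^3 \<Rightarrow> (real^2) set" where
  "circumconic A B C m = {Y. m \<bullet> circum_monomials (bary A B C Y) = 0}"

lemma conic_through_vertices_is_circumconic:
  assumes "\<not> collinear {A, B, C}" "is_conic K" "{A, B, C} \<subseteq> K"
  obtains m where "m \<noteq> 0" "K = circumconic A B C m"
proof -
  obtain a b c d e f where abc: "(a, b, c) \<noteq> (0, 0, 0)" and K: "K = conic_set a b c d e f"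
    using assms(2) unfolding is_conic_def by blast
  let ?Q = "conic_poly a b c d e f"
  define m :: "real^3" where "m = vector [?Q (midpoint B C), ?Q (midpoint C A), ?Q (midpoint A B)]"
  have K_iff: "Y \<in> K \<longleftrightarrow> ?Q Y = 0" for Y
    by (simp add: K conic_set_def conic_poly_def)
  have "?Q Y = 4 * (m \<bullet> circum_monomials (bary A B C Y))" for Y
    using conic_poly_from_bary[of "bary A B C Y" a b c d e f A B C] bary_sum[OF assms(1)] assms(3)
    by (simp add: from_bary_bary[OF assms(1)] m_def K_iff)
  then have "K = circumconic A B C m"
    by (auto simp: circumconic_def K_iff)
  moreover have "m \<noteq> 0"
  proof
    assume "m = 0"
    then have "\<forall>Y. ?Q Y = 0" using \<open>\<And>Y. ?Q Y = _\<close> by simp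
    then show False using conic_poly_identically_zero abc by blast
  qed
  ultimately show ?thesis using that by blast
qed

lemma infinite_circumconic:
  assumes "\<not> collinear {A, B, C}" "m \<noteq> 0"
  shows "infinite (circumconic A B C m)"
proof -
  let ?S = "{y. y$1 + y$2 + y$3 = 1 \<and> m \<bullet> circum_monomials y = 0}"
  have "inj_on (from_bary A B C) ?S"
    by (rule inj_on_inverseI[where g = "bary A B C"]) (simp add: bary_from_bary[OF assms(1)])
  moreover have "from_bary A B C ` ?S \<subseteq> circumconic A B C m"
    by (auto simp: circumconic_def bary_from_bary[OF assms(1)])
  ultimately show ?thesis
    using infinite_circumconic_bary[OF assms(2)] finite_imageD finite_subset by blast
qed

lemma circumconic_scaleR:
  "c \<noteq> 0 \<Longrightarrow> circumconic A B C (c *\<^sub>R m) = circumconic A B C m"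
  by (simp add: circumconic_def)

lemma finite_circumconic_Int_imp_cross_ne_0:
  assumes "\<not> collinear {A, B, C}" "m \<noteq> 0" "l \<noteq> 0"
    and "finite (circumconic A B C m \<inter> circumconic A B C l)"
  shows "m \<times> l \<noteq> 0"
proof
  assume "m \<times> l = 0"
  then obtain c where "l = c *\<^sub>R m"
    using assms(2) by (auto simp: cross_eq_0 collinear_lemma)
  with assms(3) have "circumconic A B C l = circumconic A B C m"
    by (simp add: circumconic_scaleR)
  then show False
    using assms(4) infinite_circumconic[OF assms(1,2)] by simp
qed

lemma inner_circum_monomials_if_component_eq_0:
  fixes m y :: "real^3"
  assumes "y$i = 0"
  shows "m \<bullet> circum_monomials y = m$i * circum_monomials y $ i"
  using exhaust_3[of i] assms by (auto simp: inner_vec_def sum_3)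

lemma infinite_collinear_with:
  fixes U V :: "'a::euclidean_space"
  assumes "U \<noteq> V"
  shows "infinite {Y. collinear {U, V, Y}}"
proof -
  have "closed_segment U V \<subseteq> {Y. collinear {U, V, Y}}"
    using collinear_subset[OF collinear_closed_segment, of "{U, V, _}" U V] by auto
  then show ?thesis
    using assms finite_subset by fastforce
qed

lemma infinite_bary_eq_0:
  assumes "\<not> collinear {A, B, C}"
  shows "infinite {Y. bary A B C Y $ i = 0}"
proof -
  have "A \<noteq> B" "B \<noteq> C" "C \<noteq> A"
    using assms by (auto simp: insert_commute)
  then show ?thesis
    using exhaust_3[of i] infinite_collinear_with bary_eq_0_iff_collinear[OF assms] by force
qed

lemma finite_circumconic_Int_imp_off_sidelines:
  assumes "\<not> collinear {A, B, C}" "finite (circumconic A B C m \<inter> circumconic A B C l)"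
    and "X \<in> circumconic A B C m \<inter> circumconic A B C l" "X \<notin> {A, B, C}"
  shows "bary A B C X $ 1 * bary A B C X $ 2 * bary A B C X $ 3 \<noteq> 0"
proof
  let ?x = "bary A B C X"
  assume "?x$1 * ?x$2 * ?x$3 = 0"
  then obtain i where "?x$i = 0" by auto
  moreover have "circum_monomials ?x $ i \<noteq> 0"
    using exhaust_3[of i] bary_non_vertex[OF assms(1,4)] \<open>?x$i = 0\<close> by auto
  ultimately have "m$i = 0" "l$i = 0"
    using assms(3) by (auto simp: circumconic_def inner_circum_monomials_if_component_eq_0)
  then have "{Y. bary A B C Y $ i = 0} \<subseteq> circumconic A B C m \<inter> circumconic A B C l"
    by (auto simp: circumconic_def inner_circum_monomials_if_component_eq_0)
  then show False
    using assms(2) infinite_bary_eq_0[OF assms(1)] finite_subset by blast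
qed

section \<open>Isogonal conjugates\<close>

lemma reflect_in_bisector:
  fixes u w :: "'a::real_inner"
  defines "d \<equiv> (1 / norm u) *\<^sub>R u + (1 / norm w) *\<^sub>R w"
  assumes "u \<noteq> 0" "w \<noteq> 0" "d \<noteq> 0"
  shows "(2 * ((s *\<^sub>R u + t *\<^sub>R w) \<bullet> d) / (d \<bullet> d)) *\<^sub>R d - (s *\<^sub>R u + t *\<^sub>R w)
    = (s * norm u / norm w) *\<^sub>R w + (t * norm w / norm u) *\<^sub>R u"
proof -
  define c where "c = norm u"
  define b where "b = norm w"
  define g where "g = 1 + (u \<bullet> w) / (b * c)"
  have "c > 0" "b > 0" using assms(2,3) by (simp_all add: c_def b_def)
  have uu: "u \<bullet> u = c^2" and ww: "w \<bullet> w = b^2"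
    by (simp_all add: c_def b_def power2_norm_eq_inner)
  have dd: "d \<bullet> d = 2 * g"
    using \<open>c > 0\<close> \<open>b > 0\<close> unfolding d_def g_def c_def[symmetric] b_def[symmetric]
    by (simp add: inner_add_left inner_add_right uu ww inner_commute[of w u] field_simps power2_eq_square)
  have xd: "(s *\<^sub>R u + t *\<^sub>R w) \<bullet> d = (s * c + t * b) * g"
    using \<open>c > 0\<close> \<open>b > 0\<close> unfolding d_def g_def c_def[symmetric] b_def[symmetric]
    by (simp add: inner_add_left inner_add_right uu ww inner_commute[of w u] field_simps power2_eq_square)
  have "g \<noteq> 0" using assms(4) dd by auto
  then have "2 * ((s *\<^sub>R u + t *\<^sub>R w) \<bullet> d) / (d \<bullet> d) = s * c + t * b"
    by (simp add: xd dd)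
  then show ?thesis
    using \<open>c > 0\<close> \<open>b > 0\<close> unfolding d_def c_def[symmetric] b_def[symmetric]
    by (simp add: scaleR_add_right scaleR_add_left algebra_simps)
qed

lemma bis_reflect_comb:
  assumes "\<not> collinear {V, U, W}"
  shows "bis_reflect V U W (s *\<^sub>R (U - V) + t *\<^sub>R (W - V))
    = (s * dist U V / dist W V) *\<^sub>R (W - V) + (t * dist W V / dist U V) *\<^sub>R (U - V)"
proof -
  define u where "u = U - V"
  define w where "w = W - V"
  have nc: "\<not> collinear {0, u, w}"
    using assms collinear_3[of U V W] by (simp add: u_def w_def insert_commute)
  then have "u \<noteq> 0" "w \<noteq> 0"
    unfolding collinear_lemma by blast+
  moreover have "(1 / norm u) *\<^sub>R u + (1 / norm w) *\<^sub>R w \<noteq> 0"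
  proof
    assume "(1 / norm u) *\<^sub>R u + (1 / norm w) *\<^sub>R w = 0"
    then have "norm w *\<^sub>R ((1 / norm u) *\<^sub>R u + (1 / norm w) *\<^sub>R w) = 0"
      by simp
    then have "(norm w / norm u) *\<^sub>R u + w = 0"
      using \<open>w \<noteq> 0\<close> by (simp add: scaleR_add_right)
    then have "w = (- (norm w / norm u)) *\<^sub>R u"
      by (simp add: add_eq_0_iff)
    then show False
      using nc unfolding collinear_lemma by blast
  qed
  ultimately show ?thesis
    using reflect_in_bisector[of u w s t]
    by (simp add: bis_reflect_def Let_def u_def w_def dist_norm)
qed

lemma isogonal_at_coeffs:
  assumes "\<not> collinear {V, U, W}"
    and "isogonal_at V U W (V + s *\<^sub>R (U - V) + t *\<^sub>R (W - V)) (V + s' *\<^sub>R (U - V) + t' *\<^sub>R (W - V))"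
  shows "s * s' * (dist U V)^2 = t * t' * (dist W V)^2"
proof -
  define u where "u = U - V"
  define w where "w = W - V"
  define c where "c = dist U V"
  define b where "b = dist W V"
  have "U \<noteq> V" "W \<noteq> V"
    using assms(1) collinear_2 by (metis insert_absorb2 insert_commute)+
  then have "c > 0" "b > 0"
    by (simp_all add: c_def b_def)
  have "det2 u w \<noteq> 0"
    using assms(1) by (simp add: collinear_iff_det2 u_def w_def)
  have "det2 (s' *\<^sub>R u + t' *\<^sub>R w) (bis_reflect V U W (s *\<^sub>R u + t *\<^sub>R w)) = 0"
    using assms(2) unfolding isogonal_at_def collinear_iff_det2 u_def w_def
    by (simp only: add.assoc add_diff_cancel_left')
  then have "det2 (s' *\<^sub>R u + t' *\<^sub>R w) ((s * c / b) *\<^sub>R w + (t * b / c) *\<^sub>R u) = 0"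
    using bis_reflect_comb[OF assms(1), of s t] by (simp add: u_def w_def c_def b_def)
  moreover have "det2 (s' *\<^sub>R u + t' *\<^sub>R w) (\<alpha> *\<^sub>R w + \<beta> *\<^sub>R u) = (s' * \<alpha> - t' * \<beta>) * det2 u w"
    for \<alpha> \<beta>
    by (simp add: det2_def algebra_simps)
  ultimately have "s' * (s * c / b) = t' * (t * b / c)"
    using \<open>det2 u w \<noteq> 0\<close> by simp
  then show ?thesis
    using \<open>c > 0\<close> \<open>b > 0\<close> by (simp add: c_def[symmetric] b_def[symmetric] field_simps power2_eq_square)
qed

lemma from_bary_from_vertex:
  assumes "y$1 + y$2 + y$3 = 1"
  shows "from_bary A B C y = B + y$3 *\<^sub>R (C - B) + y$1 *\<^sub>R (A - B)"
    "from_bary A B C y = C + y$1 *\<^sub>R (A - C) + y$2 *\<^sub>R (B - C)"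
proof -
  have "from_bary A B C y = (y$1 + y$2 + y$3) *\<^sub>R B + y$3 *\<^sub>R (C - B) + y$1 *\<^sub>R (A - B)"
    "from_bary A B C y = (y$1 + y$2 + y$3) *\<^sub>R C + y$1 *\<^sub>R (A - C) + y$2 *\<^sub>R (B - C)"
    by (simp_all add: from_bary_def algebra_simps)
  then show "from_bary A B C y = B + y$3 *\<^sub>R (C - B) + y$1 *\<^sub>R (A - B)"
    "from_bary A B C y = C + y$1 *\<^sub>R (A - C) + y$2 *\<^sub>R (B - C)"
    using assms by simp_all
qed

lemma isogonal_conj_bary_nonzero:
  assumes "isogonal_conj A B C P P'"
  shows "\<forall>i. bary A B C P $ i \<noteq> 0" "\<forall>i. bary A B C P' $ i \<noteq> 0"
  using assms bary_eq_0_iff_collinear by (simp_all add: forall_3 isogonal_conj_def)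

lemma isogonal_conj_bary:
  assumes "isogonal_conj A B C P P'"
  obtains a where
    "bary A B C P * bary A B C P' = a *\<^sub>R vector [(dist B C)^2, (dist C A)^2, (dist A B)^2]"
proof -
  let ?p = "bary A B C P" and ?p' = "bary A B C P'"
  have nc: "\<not> collinear {A, B, C}" "\<not> collinear {B, C, A}" "\<not> collinear {C, A, B}"
    using assms by (simp_all add: isogonal_conj_def insert_commute)
  have "from_bary A B C ?p = P" "from_bary A B C ?p' = P'"
    using from_bary_bary[OF nc(1)] by simp_all
  then have "isogonal_at B C A (B + ?p$3 *\<^sub>R (C - B) + ?p$1 *\<^sub>R (A - B))
      (B + ?p'$3 *\<^sub>R (C - B) + ?p'$1 *\<^sub>R (A - B))"
    "isogonal_at C A B (C + ?p$1 *\<^sub>R (A - C) + ?p$2 *\<^sub>R (B - C))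
      (C + ?p'$1 *\<^sub>R (A - C) + ?p'$2 *\<^sub>R (B - C))"
    using assms from_bary_from_vertex[of ?p A B C] from_bary_from_vertex[of ?p' A B C] bary_sum[OF nc(1)]
    unfolding isogonal_conj_def by simp_all
  \<comment> \<open>the relation at the vertex \<open>A\<close> follows from these two\<close>
  then have rel: "?p$3 * ?p'$3 * (dist C B)^2 = ?p$1 * ?p'$1 * (dist A B)^2"
    "?p$1 * ?p'$1 * (dist A C)^2 = ?p$2 * ?p'$2 * (dist B C)^2"
    using isogonal_at_coeffs nc(2,3) by blast+
  have "B \<noteq> C" using nc(1) by auto
  then have "dist B C \<noteq> 0" by simp
  define a where "a = ?p$1 * ?p'$1 / (dist B C)^2"
  have "?p * ?p' = a *\<^sub>R vector [(dist B C)^2, (dist C A)^2, (dist A B)^2]"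
    using rel \<open>dist B C \<noteq> 0\<close>
    by (simp add: vec_eq_iff forall_3 a_def dist_commute field_simps)
  then show ?thesis using that by blast
qed

theorem lemma2p2:
  fixes A B C P P' Q Q' R R' X :: "real^2" and K1 K2 :: "(real^2) set"
  assumes "\<not> collinear {A, B, C}"
    and "isogonal_conj A B C P P'"
    and "isogonal_conj A B C Q Q'"
    and "P \<noteq> Q"
    and "collinear {P, Q, R}"
    and "collinear {P', Q', R'}"
    and "R \<notin> {A, B, C, P}"
    and "R' \<notin> {A, B, C, Q'}"
    and "R \<noteq> R'"
    and "is_conic K1" and "{A, B, C, P, R} \<subseteq> K1"
    and "is_conic K2" and "{A, B, C, Q', R'} \<subseteq> K2"
    and "finite (K1 \<inter> K2)"
    and "X \<in> K1 \<inter> K2" and "X \<notin> {A, B, C}"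
  shows "collinear {R, R', X}"
proof -
  note nc = assms(1)
  let ?b = "bary A B C" and ?k = "vector [(dist B C)^2, (dist C A)^2, (dist A B)^2] :: real^3"
  obtain m where "m \<noteq> 0" and K1: "K1 = circumconic A B C m"
    using conic_through_vertices_is_circumconic[OF nc assms(10)] assms(11) by auto
  obtain l where "l \<noteq> 0" and K2: "K2 = circumconic A B C l"
    using conic_through_vertices_is_circumconic[OF nc assms(12)] assms(13) by auto
  obtain a b where "?b P * ?b P' = a *\<^sub>R ?k" "?b Q * ?b Q' = b *\<^sub>R ?k"
    using isogonal_conj_bary[OF assms(2)] isogonal_conj_bary[OF assms(3)] by metis
  moreover note isogonal_conj_bary_nonzero[OF assms(2)] isogonal_conj_bary_nonzero[OF assms(3)]
  moreover have "?b P \<times> ?b Q \<noteq> 0"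
    using assms(4) bary_cross_eq_0_iff[OF nc] by blast
  moreover have "?b P \<bullet> (?b Q \<times> ?b R) = 0" "?b P' \<bullet> (?b Q' \<times> ?b R') = 0"
    using assms(5,6) collinear_iff_bary[OF nc] by blast+
  moreover have "?b P * ?b R * (?b P \<times> ?b R) \<noteq> 0" "?b Q' * ?b R' * (?b Q' \<times> ?b R') \<noteq> 0"
    using bary_times_cross_ne_0[OF nc isogonal_conj_bary_nonzero(1)[OF assms(2)] assms(7)]
      bary_times_cross_ne_0[OF nc isogonal_conj_bary_nonzero(2)[OF assms(3)] assms(8)] .
  moreover have "m \<bullet> circum_monomials (?b P) = 0" "m \<bullet> circum_monomials (?b R) = 0"
    "l \<bullet> circum_monomials (?b Q') = 0" "l \<bullet> circum_monomials (?b R') = 0"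
    "m \<bullet> circum_monomials (?b X) = 0" "l \<bullet> circum_monomials (?b X) = 0"
    using assms(11,13,15) K1 K2 by (auto simp: circumconic_def)
  moreover have "m \<times> l \<noteq> 0"
    using finite_circumconic_Int_imp_cross_ne_0[OF nc \<open>m \<noteq> 0\<close> \<open>l \<noteq> 0\<close>] assms(14) K1 K2 by blast
  moreover have "?b X $ 1 * ?b X $ 2 * ?b X $ 3 \<noteq> 0"
    using finite_circumconic_Int_imp_off_sidelines[OF nc] assms(14-16) K1 K2 by blast
  ultimately have "?b X \<bullet> (?b R \<times> ?b R') = 0"
    by (rule circumconics_meet_on_line_bary)
  then show ?thesis
    unfolding collinear_iff_bary[OF nc] by (metis cross_triple inner_commute)
qed

end
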